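(* Let $G$ and $H$ be finite simple connected graphs with $|V(G)|>1$, and let $L$ be a non-empty subset of $V(G)$. If $\mathscr{C}(G\circ_L H)$ is an accessible set system, then $\mathscr{C}(H)$ is an accessible set system.
   Context: For a graph $\Gamma$ and $A\subseteq V(\Gamma)$, $\omega(\Gamma\setminus A)$ is the number of connected components of the induced subgraph on $V(\Gamma)\setminus A$. A subset $T\subseteq V(\Gamma)$ is a cutset if $T=\emptyset$ or, for every $v\in T$, $\omega(\Gamma\setminus (T\setminus\{v\}))<\omega(\Gamma\setminus T)$; $\mathscr{C}(\Gamma)$ is the set of cutsets. $\mathscr{C}(\Gamma)$ is an accessible set system if for every non-empty $T\in\mathscr{C}(\Gamma)$ there is $t\in T$ with $T\setminus\{t\}\in\mathscr{C}(\Gamma)$. For a non-empty $L\subseteq V(G)$, $G\circ_L H$ is the graph obtained from $G$ by taking, for each $v\in L$, a disjoint copy $H_v$ of $H$ and joining $v$ to every vertex of $H_v$. *)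

theory Defs
  imports Main
begin

definition simple_graph :: "'a set \<Rightarrow> 'a set set \<Rightarrow> bool" where
  "simple_graph V E \<longleftrightarrow> finite V \<and>
     (\<forall>e\<in>E. \<exists>u v. u \<noteq> v \<and> e = {u, v} \<and> u \<in> V \<and> v \<in> V)"

definition reach_in :: "'a set set \<Rightarrow> 'a set \<Rightarrow> 'a \<Rightarrow> 'a \<Rightarrow> bool" where
  "reach_in E S u w \<longleftrightarrow> u \<in> S \<and> w \<in> S \<and>
     (u, w) \<in> {(x, y). x \<in> S \<and> y \<in> S \<and> {x, y} \<in> E}\<^sup>*"

definition connected_graph :: "'a set \<Rightarrow> 'a set set \<Rightarrow> bool" where
  "connected_graph V E \<longleftrightarrow> V \<noteq> {} \<and> (\<forall>u\<in>V. \<forall>w\<in>V. reach_in E V u w)"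

definition num_comp :: "'a set \<Rightarrow> 'a set set \<Rightarrow> 'a set \<Rightarrow> nat" where
  "num_comp V E A = card {C. \<exists>v \<in> V - A. C = {w. reach_in E (V - A) v w}}"

definition is_cutset :: "'a set \<Rightarrow> 'a set set \<Rightarrow> 'a set \<Rightarrow> bool" where
  "is_cutset V E T \<longleftrightarrow> T \<subseteq> V \<and>
     (T = {} \<or> (\<forall>v\<in>T. num_comp V E (T - {v}) < num_comp V E T))"

definition cutsets :: "'a set \<Rightarrow> 'a set set \<Rightarrow> 'a set set" where
  "cutsets V E = {T. is_cutset V E T}"

definition accessible :: "'a set set \<Rightarrow> bool" where
  "accessible \<F> \<longleftrightarrow> (\<forall>T\<in>\<F>. T \<noteq> {} \<longrightarrow> (\<exists>t\<in>T. T - {t} \<in> \<F>))"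

text \<open>The graph G \<circ>_L H: vertex Inl v for v in V(G), vertex Inr (v,h) for the copy of
  h in H_v (v in L).\<close>
definition corona_V :: "'a set \<Rightarrow> 'a set \<Rightarrow> 'b set \<Rightarrow> ('a + 'a \<times> 'b) set" where
  "corona_V VG L VH = Inl ` VG \<union> Inr ` (L \<times> VH)"

definition corona_E :: "'a set set \<Rightarrow> 'a set \<Rightarrow> 'b set \<Rightarrow> 'b set set
    \<Rightarrow> ('a + 'a \<times> 'b) set set" where
  "corona_E EG L VH EH =
     (\<lambda>e. Inl ` e) ` EG
   \<union> {(\<lambda>h. Inr (v, h)) ` e | v e. v \<in> L \<and> e \<in> EH}
   \<union> {{Inl v, Inr (v, h)} | v h. v \<in> L \<and> h \<in> VH}"

end

theory Submission
  imports Defs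
begin

(* Fix a root v in L and write H_v for its copy of H. Deleting v together with
   the image of S in H_v leaves the components of H_v - S next to a number of
   components outside H_v that does not depend on S. Deleting the image of S
   without v leaves a connected graph, because every vertex still reaches G
   and G is connected. Hence, for nonempty T, the set {v} + T_v is a cutset of
   G o_L H exactly when T is a cutset of H, while T_v alone never is one. So an
   accessible step from {v} + T_v must remove some t_v, and the smaller cutset
   {v} + (T - t)_v pulls back to the cutset T - t of H. *)

definition components_in :: "'a set set \<Rightarrow> 'a set \<Rightarrow> 'a set set" where
  "components_in E S = {C. \<exists>v \<in> S. C = {w. reach_in E S v w}}"

lemma num_comp_eq_card_components_in: "num_comp V E A = card (components_in E (V - A))"
  unfolding num_comp_def components_in_def by simp

lemma reach_in_refl: "x \<in> S \<Longrightarrow> reach_in E S x x"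
  unfolding reach_in_def by simp

lemma reach_in_sym:
  assumes "reach_in E S u w"
  shows "reach_in E S w u"
proof -
  let ?R = "{(x, y). x \<in> S \<and> y \<in> S \<and> {x, y} \<in> E}"
  have "sym ?R" unfolding sym_def by (auto simp: insert_commute)
  then have "sym (?R\<^sup>*)" by (rule sym_rtrancl)
  then show ?thesis using assms unfolding reach_in_def by (auto dest: symD)
qed

lemma reach_in_trans: "reach_in E S u w \<Longrightarrow> reach_in E S w x \<Longrightarrow> reach_in E S u x"
  unfolding reach_in_def by auto

lemma reach_in_edge: "x \<in> S \<Longrightarrow> y \<in> S \<Longrightarrow> {x, y} \<in> E \<Longrightarrow> reach_in E S x y"
  unfolding reach_in_def by auto

lemma reach_in_mono:
  assumes "S \<subseteq> S'" and "reach_in E S u w"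
  shows "reach_in E S' u w"
proof -
  have "{(x, y). x \<in> S \<and> y \<in> S \<and> {x, y} \<in> E} \<subseteq> {(x, y). x \<in> S' \<and> y \<in> S' \<and> {x, y} \<in> E}"
    using assms(1) by auto
  then show ?thesis using assms unfolding reach_in_def by (meson rtrancl_mono subsetD)
qed

lemma reach_in_image:
  assumes edges: "\<forall>x\<in>S. \<forall>y\<in>S. {x, y} \<in> E \<longrightarrow> {f x, f y} \<in> E'"
    and "reach_in E S x y"
  shows "reach_in E' (f ` S) (f x) (f y)"
proof -
  have "(x, y) \<in> {(x, y). x \<in> S \<and> y \<in> S \<and> {x, y} \<in> E}\<^sup>*"
    using assms(2) unfolding reach_in_def by simp
  then have "(f x, f y) \<in> {(x, y). x \<in> f ` S \<and> y \<in> f ` S \<and> {x, y} \<in> E'}\<^sup>*"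
  proof (induction rule: rtrancl_induct)
    case (step y z)
    then have "(f y, f z) \<in> {(x, y). x \<in> f ` S \<and> y \<in> f ` S \<and> {x, y} \<in> E'}"
      using edges by auto
    with step.IH show ?case by (rule rtrancl_into_rtrancl)
  qed simp
  then show ?thesis using assms(2) unfolding reach_in_def by auto
qed

lemma reach_in_image_iff:
  assumes inj: "inj_on f S" and edges: "\<forall>x\<in>S. \<forall>y\<in>S. {f x, f y} \<in> E' \<longleftrightarrow> {x, y} \<in> E"
    and "x \<in> S" and "y \<in> S"
  shows "reach_in E' (f ` S) (f x) (f y) \<longleftrightarrow> reach_in E S x y"
proof
  let ?g = "the_inv_into S f"
  have "\<forall>a\<in>f ` S. \<forall>b\<in>f ` S. {a, b} \<in> E' \<longrightarrow> {?g a, ?g b} \<in> E"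
    using edges inj by (auto simp: the_inv_into_f_f)
  moreover assume "reach_in E' (f ` S) (f x) (f y)"
  ultimately have "reach_in E (?g ` f ` S) (?g (f x)) (?g (f y))"
    by (rule reach_in_image)
  then show "reach_in E S x y"
    using inj assms(3,4) by (simp add: the_inv_into_f_f the_inv_into_onto)
next
  assume "reach_in E S x y"
  then show "reach_in E' (f ` S) (f x) (f y)"
    by (rule reach_in_image[rotated]) (use edges in blast)
qed

lemma components_in_image:
  assumes inj: "inj_on f S" and edges: "\<forall>x\<in>S. \<forall>y\<in>S. {f x, f y} \<in> E' \<longleftrightarrow> {x, y} \<in> E"
  shows "components_in E' (f ` S) = image f ` components_in E S"
proof -
  have "{w. reach_in E' (f ` S) (f x) w} = f ` {w. reach_in E S x w}" if "x \<in> S" for x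
  proof (intro equalityI subsetI)
    fix w assume "w \<in> {w. reach_in E' (f ` S) (f x) w}"
    moreover from this obtain y where "y \<in> S" "w = f y"
      unfolding reach_in_def by auto
    ultimately show "w \<in> f ` {w. reach_in E S x w}"
      using reach_in_image_iff[OF inj edges \<open>x \<in> S\<close>] by auto
  next
    fix w assume "w \<in> f ` {w. reach_in E S x w}"
    then obtain y where "reach_in E S x y" "w = f y" by auto
    moreover from this have "y \<in> S" unfolding reach_in_def by simp
    ultimately show "w \<in> {w. reach_in E' (f ` S) (f x) w}"
      using reach_in_image_iff[OF inj edges \<open>x \<in> S\<close>] by auto
  qed
  then show ?thesis unfolding components_in_def by (auto simp: image_iff)
qed

lemma components_in_subset: "C \<in> components_in E S \<Longrightarrow> C \<subseteq> S"
  unfolding components_in_def reach_in_def by auto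

lemma finite_components_in: "finite S \<Longrightarrow> finite (components_in E S)"
  by (rule finite_subset[of _ "Pow S"]) (auto dest: components_in_subset)

lemma card_components_in_image:
  assumes inj: "inj_on f S" and edges: "\<forall>x\<in>S. \<forall>y\<in>S. {f x, f y} \<in> E' \<longleftrightarrow> {x, y} \<in> E"
  shows "card (components_in E' (f ` S)) = card (components_in E S)"
proof -
  have "inj_on (image f) (components_in E S)"
    using inj_on_image_Pow[OF inj] by (rule inj_on_subset) (auto dest: components_in_subset)
  then show ?thesis by (simp add: components_in_image[OF assms] card_image)
qed

lemma reach_in_Un_no_edges:
  assumes no_edges: "\<forall>x\<in>A. \<forall>y\<in>B. {x, y} \<notin> E" and "x \<in> A"
  shows "reach_in E (A \<union> B) x w \<longleftrightarrow> reach_in E A x w"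
proof
  assume "reach_in E (A \<union> B) x w"
  then have "(x, w) \<in> {(x, y). x \<in> A \<union> B \<and> y \<in> A \<union> B \<and> {x, y} \<in> E}\<^sup>*"
    unfolding reach_in_def by simp
  then have "w \<in> A \<and> (x, w) \<in> {(x, y). x \<in> A \<and> y \<in> A \<and> {x, y} \<in> E}\<^sup>*"
  proof (induction rule: rtrancl_induct)
    case (step y z)
    then have "z \<in> A" using no_edges by auto
    with step show ?case by (auto intro: rtrancl_into_rtrancl)
  qed (simp add: \<open>x \<in> A\<close>)
  then show "reach_in E A x w" unfolding reach_in_def using \<open>x \<in> A\<close> by simp
qed (rule reach_in_mono[of A]; simp)

lemma components_in_Un_no_edges:
  assumes no_edges: "\<forall>x\<in>A. \<forall>y\<in>B. {x, y} \<notin> E"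
  shows "components_in E (A \<union> B) = components_in E A \<union> components_in E B"
proof -
  have "\<forall>x\<in>B. \<forall>y\<in>A. {x, y} \<notin> E"
    using no_edges by (metis insert_commute)
  then have "{w. reach_in E (A \<union> B) x w} = {w. reach_in E B x w}" if "x \<in> B" for x
    using reach_in_Un_no_edges[of B A E x] that by (simp add: Un_commute)
  moreover have "{w. reach_in E (A \<union> B) x w} = {w. reach_in E A x w}" if "x \<in> A" for x
    using reach_in_Un_no_edges[OF no_edges that] by simp
  ultimately show ?thesis unfolding components_in_def by blast
qed

lemma card_components_in_Un_no_edges:
  assumes "\<forall>x\<in>A. \<forall>y\<in>B. {x, y} \<notin> E" and "A \<inter> B = {}" and "finite A" and "finite B"
  shows "card (components_in E (A \<union> B)) = card (components_in E A) + card (components_in E B)"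
proof -
  have "components_in E A \<inter> components_in E B = {}"
  proof (intro equals0I)
    fix C assume C: "C \<in> components_in E A \<inter> components_in E B"
    then obtain x where "x \<in> A" "C = {w. reach_in E A x w}"
      unfolding components_in_def by blast
    then have "x \<in> C" by (simp add: reach_in_refl)
    with C components_in_subset assms(2) show False by blast
  qed
  then show ?thesis
    using components_in_Un_no_edges[OF assms(1)] assms(3,4)
    by (simp add: card_Un_disjoint finite_components_in)
qed

lemma card_components_in_eq_1:
  assumes "r \<in> S" and "\<forall>x\<in>S. reach_in E S x r"
  shows "card (components_in E S) = 1"
proof -
  have "{w. reach_in E S x w} = {w. reach_in E S r w}" if "x \<in> S" for x
  proof -
    have xr: "reach_in E S x r" using assms(2) that by blast
    then have rx: "reach_in E S r x" by (rule reach_in_sym)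
    show ?thesis using reach_in_trans[OF xr] reach_in_trans[OF rx] by blast
  qed
  then have "components_in E S = {{w. reach_in E S r w}}"
    unfolding components_in_def using assms(1) by blast
  then show ?thesis by simp
qed

lemma num_comp_pos:
  assumes "finite V" and "\<not> V \<subseteq> A"
  shows "0 < num_comp V E A"
proof -
  obtain x where "x \<in> V - A" using assms(2) by blast
  then have "{w. reach_in E (V - A) x w} \<in> components_in E (V - A)"
    unfolding components_in_def by blast
  then have "components_in E (V - A) \<noteq> {}" by blast
  moreover have "finite (components_in E (V - A))"
    using assms(1) by (simp add: finite_components_in)
  ultimately show ?thesis by (simp add: num_comp_eq_card_components_in card_gt_0_iff)
qed

lemma num_comp_nonempty_cutset_ge_2:
  assumes "is_cutset V E T" and "T \<noteq> {}" and "finite V"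
  shows "2 \<le> num_comp V E T"
proof -
  obtain t where t: "t \<in> T" using assms(2) by blast
  with assms(1) have "t \<in> V" and drop: "num_comp V E (T - {t}) < num_comp V E T"
    unfolding is_cutset_def by auto
  then have "0 < num_comp V E (T - {t})"
    by (intro num_comp_pos) (auto simp: assms(3))
  with drop show ?thesis by linarith
qed

lemma corona_E_Inl_iff:
  fixes x y :: 'a and VH :: "'b set"
  shows "{Inl x, Inl y} \<in> corona_E EG L VH EH \<longleftrightarrow> {x, y} \<in> EG"
proof -
  have "inj (image (Inl :: 'a \<Rightarrow> 'a + 'a \<times> 'b))"
    by (simp add: inj_def inj_image_eq_iff)
  then have "Inl ` {x, y} \<in> image (Inl :: 'a \<Rightarrow> 'a + 'a \<times> 'b) ` EG \<longleftrightarrow> {x, y} \<in> EG"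
    by (rule inj_image_mem_iff)
  then show ?thesis unfolding corona_E_def by (auto simp: doubleton_eq_iff)
qed

lemma corona_E_Inr_iff:
  fixes x y :: 'b and EG :: "'a set set"
  assumes "v \<in> L"
  shows "{Inr (v, x), Inr (v, y)} \<in> corona_E EG L VH EH \<longleftrightarrow> {x, y} \<in> EH"
proof -
  let ?copy = "\<lambda>w h. Inr (w, h) :: 'a + 'a \<times> 'b"
  have "?copy v ` {x, y} = ?copy w ` e \<longleftrightarrow> w = v \<and> e = {x, y}" for w e
  proof
    assume eq: "?copy v ` {x, y} = ?copy w ` e"
    then have "?copy v x \<in> ?copy w ` e" by blast
    then have "w = v" by blast
    moreover have "inj (?copy v)" by (simp add: inj_def)
    ultimately show "w = v \<and> e = {x, y}"
      using eq inj_image_eq_iff[of "?copy v" "{x, y}" e] by auto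
  qed auto
  then show ?thesis using assms unfolding corona_E_def by (auto simp: doubleton_eq_iff)
qed

lemma corona_E_pendant: "v \<in> L \<Longrightarrow> h \<in> VH \<Longrightarrow> {Inl v, Inr (v, h)} \<in> corona_E EG L VH EH"
  unfolding corona_E_def by blast

lemma corona_E_neighbour_Inr:
  assumes "{a, Inr (v, h)} \<in> corona_E EG L VH EH"
  shows "a = Inl v \<or> (\<exists>h'. a = Inr (v, h'))"
  using assms unfolding corona_E_def
proof (elim UnE)
  assume "{a, Inr (v, h)} \<in> {(\<lambda>h. Inr (w, h)) ` e | w e. w \<in> L \<and> e \<in> EH}"
  then obtain w e where "{a, Inr (v, h)} = (\<lambda>h. Inr (w, h)) ` e" by blast
  then have "a \<in> (\<lambda>h. Inr (w, h)) ` e" and "Inr (v, h) \<in> (\<lambda>h. Inr (w, h)) ` e" by blast+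
  then show ?thesis by auto
qed (auto simp: doubleton_eq_iff)

locale corona_root =
  fixes VG :: "'a set" and EG :: "'a set set" and VH :: "'b set" and EH :: "'b set set"
    and L :: "'a set" and v :: 'a
  assumes finite_VG: "finite VG" and finite_VH: "finite VH"
    and connected_G: "connected_graph VG EG"
    and L_subset: "L \<subseteq> VG" and root: "v \<in> L"
begin

abbreviation V :: "('a + 'a \<times> 'b) set" where "V \<equiv> corona_V VG L VH"

abbreviation E :: "('a + 'a \<times> 'b) set set" where "E \<equiv> corona_E EG L VH EH"

definition copy :: "'b set \<Rightarrow> ('a + 'a \<times> 'b) set" where
  "copy S = (\<lambda>h. Inr (v, h)) ` S"

definition outer_comps :: nat where
  "outer_comps = card (components_in E (V - insert (Inl v) (copy VH)))"

lemma root_copy_Diff_root: "insert (Inl v) (copy T) - {Inl v} = copy T"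
  unfolding copy_def by auto

lemma root_copy_Diff_copy: "insert (Inl v) (copy T) - {Inr (v, t)} = insert (Inl v) (copy (T - {t}))"
  unfolding copy_def by auto

lemma copy_Diff: "copy T - {Inr (v, t)} = copy (T - {t})"
  unfolding copy_def by auto

lemma num_comp_remove_root_copy:
  "num_comp V E (insert (Inl v) (copy S)) = outer_comps + num_comp VH EH S"
proof -
  let ?A = "V - insert (Inl v) (copy VH)" and ?B = "copy (VH - S)"
  have split: "V - insert (Inl v) (copy S) = ?A \<union> ?B"
    using root unfolding corona_V_def copy_def by auto
  have "\<forall>x\<in>?A. \<forall>y\<in>?B. {x, y} \<notin> E"
    unfolding copy_def corona_V_def using corona_E_neighbour_Inr by fastforce
  moreover have "finite V"
    using finite_VG finite_VH L_subset unfolding corona_V_def by (auto intro: finite_subset)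
  moreover have "card (components_in E ?B) = num_comp VH EH S"
    unfolding copy_def num_comp_eq_card_components_in
    by (rule card_components_in_image) (auto simp: inj_on_def corona_E_Inr_iff[OF root])
  ultimately show ?thesis
    unfolding outer_comps_def num_comp_eq_card_components_in split
    by (subst card_components_in_Un_no_edges) (auto simp: copy_def finite_VH)
qed

lemma num_comp_remove_copy: "num_comp V E (copy S) = 1"
proof -
  let ?W = "V - copy S"
  have G_in_W: "Inl ` VG \<subseteq> ?W"
    unfolding corona_V_def copy_def by auto
  have G_to_root: "reach_in E ?W (Inl u) (Inl v)" if "u \<in> VG" for u
  proof -
    have "reach_in EG VG u v"
      using connected_G that root L_subset unfolding connected_graph_def by auto
    then have "reach_in E (Inl ` VG) (Inl u) (Inl v)"
      by (rule reach_in_image[rotated]) (simp add: corona_E_Inl_iff)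
    then show ?thesis by (rule reach_in_mono[OF G_in_W])
  qed
  have "reach_in E ?W x (Inl v)" if x: "x \<in> ?W" for x
  proof (cases x)
    case (Inl u)
    then show ?thesis using x G_to_root unfolding corona_V_def by auto
  next
    case (Inr p)
    then obtain u h where x_eq: "x = Inr (u, h)" and "u \<in> L" and "h \<in> VH"
      using x unfolding corona_V_def by auto
    then have "{x, Inl u} \<in> E"
      using corona_E_pendant by (metis insert_commute)
    moreover have "u \<in> VG" using \<open>u \<in> L\<close> L_subset by blast
    ultimately have "reach_in E ?W x (Inl u)"
      using x G_in_W by (intro reach_in_edge) auto
    with G_to_root[OF \<open>u \<in> VG\<close>] show ?thesis by (blast intro: reach_in_trans)
  qed
  moreover have "Inl v \<in> ?W" using G_in_W root L_subset by blast
  ultimately show ?thesis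
    unfolding num_comp_eq_card_components_in by (intro card_components_in_eq_1) auto
qed

lemma root_copy_subset_iff: "insert (Inl v) (copy T) \<subseteq> V \<longleftrightarrow> T \<subseteq> VH"
  using root L_subset unfolding corona_V_def copy_def by auto

lemma num_comp_drop_root_copy_iff:
  "num_comp V E (insert (Inl v) (copy T) - {Inr (v, t)}) < num_comp V E (insert (Inl v) (copy T))
    \<longleftrightarrow> num_comp VH EH (T - {t}) < num_comp VH EH T"
  by (simp add: root_copy_Diff_copy num_comp_remove_root_copy)

lemma is_cutset_of_is_cutset_root_copy:
  assumes "is_cutset V E (insert (Inl v) (copy T))"
  shows "is_cutset VH EH T"
  using assms unfolding is_cutset_def root_copy_subset_iff num_comp_drop_root_copy_iff[symmetric]
  by (auto simp: copy_def)

lemma is_cutset_root_copy: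
  assumes cut: "is_cutset VH EH T" and "T \<noteq> {}"
  shows "is_cutset V E (insert (Inl v) (copy T))"
proof -
  have "2 \<le> num_comp VH EH T"
    using assms finite_VH by (intro num_comp_nonempty_cutset_ge_2)
  then have "num_comp V E (insert (Inl v) (copy T) - {Inl v}) < num_comp V E (insert (Inl v) (copy T))"
    by (simp add: root_copy_Diff_root num_comp_remove_copy num_comp_remove_root_copy)
  with cut show ?thesis
    unfolding is_cutset_def root_copy_subset_iff num_comp_drop_root_copy_iff[symmetric]
    by (auto simp: copy_def)
qed

lemma not_is_cutset_copy:
  assumes "T \<noteq> {}"
  shows "\<not> is_cutset V E (copy T)"
proof
  obtain t where "t \<in> T" using assms by blast
  then have "Inr (v, t) \<in> copy T" unfolding copy_def by blast
  moreover assume "is_cutset V E (copy T)"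
  ultimately have "num_comp V E (copy T - {Inr (v, t)}) < num_comp V E (copy T)"
    using assms unfolding is_cutset_def by blast
  then show False by (simp add: copy_Diff num_comp_remove_copy)
qed

end

theorem theorem3p9:
  fixes VG :: "'a set" and EG :: "'a set set" and VH :: "'b set" and EH :: "'b set set"
    and L :: "'a set"
  assumes "simple_graph VG EG" and "connected_graph VG EG" and "card VG > 1"
    and "simple_graph VH EH" and "connected_graph VH EH"
    and "L \<subseteq> VG" and "L \<noteq> {}"
    and "accessible (cutsets (corona_V VG L VH) (corona_E EG L VH EH))"
  shows "accessible (cutsets VH EH)"
  unfolding accessible_def
proof (intro ballI impI)
  obtain v where "v \<in> L" using assms(7) by blast
  interpret corona_root VG EG VH EH L v
    using assms(1,2,4,6) \<open>v \<in> L\<close> by unfold_locales (simp_all add: simple_graph_def)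
  fix T assume "T \<in> cutsets VH EH" and "T \<noteq> {}"
  then have "insert (Inl v) (copy T) \<in> cutsets V E"
    by (simp add: cutsets_def is_cutset_root_copy)
  moreover have "\<And>U. U \<in> cutsets V E \<Longrightarrow> U \<noteq> {} \<Longrightarrow> \<exists>s\<in>U. U - {s} \<in> cutsets V E"
    using assms(8) unfolding accessible_def by blast
  ultimately have "\<exists>s\<in>insert (Inl v) (copy T). insert (Inl v) (copy T) - {s} \<in> cutsets V E"
    by blast
  then obtain s where s: "s \<in> insert (Inl v) (copy T)"
    and cut: "insert (Inl v) (copy T) - {s} \<in> cutsets V E" ..
  have "s \<noteq> Inl v"
  proof
    assume "s = Inl v"
    with cut have "is_cutset V E (copy T)" by (simp add: cutsets_def root_copy_Diff_root)
    with \<open>T \<noteq> {}\<close> show False by (simp add: not_is_cutset_copy)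
  qed
  with s obtain t where "t \<in> T" and "s = Inr (v, t)" by (auto simp: copy_def)
  with cut have "is_cutset VH EH (T - {t})"
    by (simp add: cutsets_def root_copy_Diff_copy is_cutset_of_is_cutset_root_copy)
  with \<open>t \<in> T\<close> show "\<exists>t\<in>T. T - {t} \<in> cutsets VH EH"
    by (auto simp: cutsets_def)
qed

end
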